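(* Assume $K(i,j)=\phi(i)\wedge\phi(j)$ with $\phi$ positive and increasing. Let $X_0,Y_0\in\ell^1_{\mathbb N}$ be nonzero with $\|X_0\|_1=\|Y_0\|_1$ and $$S_m(Y_0)\le S_m(X_0)\quad\text{for all } 1\le m\le\|X_0\|_1.$$ Then the stochastic min-driven coagulation processes started from $X_0$ and from $Y_0$ can be constructed on a common probability space so that $T^{X_0}_i\le T^{Y_0}_i$ for all $i\ge1$ and $T^{X_0}\le T^{Y_0}$. In particular, for every nonzero $X_0\in\ell^1_{\mathbb N}$, with $n=\|X_0\|_1$, the random variables $T^{X_0}_1$ and $T^{X_0}$ are stochastically dominated by $T_1^{n\mathbf e_1}$ and $T^{n\mathbf e_1}$ respectively. (On a common probability space: $T_1^{X_0}\le T_1^{n\mathbf e_1}$ and $T^{X_0}\le T^{n\mathbf e_1}$.)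
   Context: $\ell^1_{\mathbb N}$ is the set of summable sequences $X=(X_i)_{i\ge1}$ of nonnegative integers, with $\|X\|_1=\sum_iX_i$ (the number of particles). $\mathbf e_i$ are the canonical unit sequences, and $\ell_X=\min\{i:X_i>0\}$. The stochastic min-driven coagulation process $X(t)$ started from $X_0$ is the continuous-time Markov chain whose only transitions from state $X$ are: - to $X-\mathbf e_{\ell_X}-\mathbf e_j+\mathbf e_{\ell_X+j}$ at rate $K(\ell_X,j)X_j$ for $j>\ell_X$; - to $X-2\mathbf e_{\ell_X}+\mathbf e_{2\ell_X}$ at rate $K(\ell_X,\ell_X)(X_{\ell_X}-1)$. For $Z\in\ell^1_{\mathbb N}$ with $\|Z\|_1=n$, $(S_1(Z),\dots,S_n(Z))$ is the list of particle sizes sorted increasingly: size $s$ appears $Z_s$ times. $T^{X_0}=\inf\{t\ge0:\|X(t)\|_1=1\}$, and $T^{X_0}_i=\inf\{t>0:X_1(t)=\dots=X_i(t)=0\}$. *)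

theory Defs
  imports "HOL-Probability.Probability"
begin

text \<open>Elements of the space of summable nonnegative integer sequences (indexed from 1)
  are represented as functions nat => nat with value 0 at index 0 and finite support.\<close>

type_synonym state = "nat \<Rightarrow> nat"

definition l1N :: "state \<Rightarrow> bool" where
  "l1N X \<longleftrightarrow> X 0 = 0 \<and> finite {i. 0 < X i}"

definition npart :: "state \<Rightarrow> nat" where
  "npart X = sum X {i. 0 < X i}"

definition lX :: "state \<Rightarrow> nat" where
  "lX X = (LEAST i. 0 < X i)"

definition unitseq :: "nat \<Rightarrow> state" where
  "unitseq i = (\<lambda>k. if k = i then 1 else 0)"

text \<open>list of particle sizes sorted increasingly; S m Z is its m-th entry (1-based)\<close>
definition size_list :: "state \<Rightarrow> nat list" where
  "size_list Z = concat (map (\<lambda>s. replicate (Z s) s) (sorted_list_of_set {s. 0 < Z s}))"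

definition S :: "nat \<Rightarrow> state \<Rightarrow> nat" where
  "S m Z = size_list Z ! (m - 1)"

definition coal :: "state \<Rightarrow> nat \<Rightarrow> nat \<Rightarrow> state" where
  "coal X a b = (\<lambda>k. X k - (if k = a then 1 else 0) - (if k = b then 1 else 0)
                        + (if k = a + b then 1 else 0))"

definition Kphi :: "(nat \<Rightarrow> real) \<Rightarrow> nat \<Rightarrow> nat \<Rightarrow> real" where
  "Kphi \<phi> i j = min (\<phi> i) (\<phi> j)"

definition qrate :: "(nat \<Rightarrow> nat \<Rightarrow> real) \<Rightarrow> state \<Rightarrow> state \<Rightarrow> real" where
  "qrate K X Y =
     (\<Sum>j\<in>{j. lX X < j \<and> 0 < X j}. if Y = coal X (lX X) j then K (lX X) j * real (X j) else 0)
     + (if Y = coal X (lX X) (lX X) then K (lX X) (lX X) * (real (X (lX X)) - 1) else 0)"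

definition qtot :: "(nat \<Rightarrow> nat \<Rightarrow> real) \<Rightarrow> state \<Rightarrow> real" where
  "qtot K X =
     (\<Sum>j\<in>{j. lX X < j \<and> 0 < X j}. K (lX X) j * real (X j))
     + K (lX X) (lX X) * (real (X (lX X)) - 1)"

text \<open>Jump chain / holding time description of the process: Z k is the state after
  the k-th jump, H k the holding time in state Z k.  Since every jump removes one particle,
  a process started from X0 jumps exactly npart X0 - 1 times and is then absorbed.
  The joint law of (jump chain, holding times) of the continuous time Markov chain with
  rates qrate is characterised by the following finite-dimensional formulas.\<close>
definition mdc_law ::
  "(nat \<Rightarrow> nat \<Rightarrow> real) \<Rightarrow> state \<Rightarrow> 'w measure \<Rightarrow> ('w \<Rightarrow> nat \<Rightarrow> state) \<Rightarrow> ('w \<Rightarrow> nat \<Rightarrow> real) \<Rightarrow> bool"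
where
  "mdc_law K X0 \<mu> Z H \<longleftrightarrow>
     prob_space \<mu> \<and> (AE \<omega> in \<mu>. Z \<omega> 0 = X0) \<and>
     (\<forall>k zs t. k \<le> npart X0 - 1 \<longrightarrow> zs 0 = X0 \<longrightarrow> (\<forall>j. 0 \<le> t j) \<longrightarrow>
        {\<omega>\<in>space \<mu>. (\<forall>j\<in>{1..k}. Z \<omega> j = zs j) \<and> (\<forall>j<k. t j < H \<omega> j)} \<in> sets \<mu> \<and>
        measure \<mu> {\<omega>\<in>space \<mu>. (\<forall>j\<in>{1..k}. Z \<omega> j = zs j) \<and> (\<forall>j<k. t j < H \<omega> j)}
          = (\<Prod>j\<in>{1..k}. qrate K (zs (j - 1)) (zs j) / qtot K (zs (j - 1))
                             * exp (- qtot K (zs (j - 1)) * t (j - 1))))"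

type_synonym jh = "(nat \<Rightarrow> state) \<times> (nat \<Rightarrow> real)"

text \<open>the continuous-time path built from jump chain and holding times, n = number of particles\<close>
definition cpath :: "nat \<Rightarrow> jh \<Rightarrow> real \<Rightarrow> state" where
  "cpath n zh t = fst zh (card {j. j < n - 1 \<and> (\<Sum>i\<le>j. snd zh i) \<le> t})"

definition jhspace :: "jh measure" where
  "jhspace = (PiM UNIV (\<lambda>_::nat. count_space (UNIV :: state set)))
               \<Otimes>\<^sub>M (PiM UNIV (\<lambda>_::nat. (borel :: real measure)))"

text \<open>T_i = inf{t > 0 : X_1(t) = ... = X_i(t) = 0} and T = inf{t >= 0 : ||X(t)|| = 1}
  (extended reals, inf of the empty set is infinity)\<close>
definition Tsub :: "nat \<Rightarrow> (real \<Rightarrow> state) \<Rightarrow> ereal" where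
  "Tsub i P = Inf (ereal ` {t. 0 < t \<and> (\<forall>m\<in>{1..i}. P t m = 0)})"

definition Tabs :: "(real \<Rightarrow> state) \<Rightarrow> ereal" where
  "Tabs P = Inf (ereal ` {t. 0 \<le> t \<and> npart (P t) = 1})"

definition mdc_coupling ::
  "(nat \<Rightarrow> nat \<Rightarrow> real) \<Rightarrow> state \<Rightarrow> state \<Rightarrow> ((real \<Rightarrow> state) \<Rightarrow> (real \<Rightarrow> state) \<Rightarrow> bool) \<Rightarrow> bool"
where
  "mdc_coupling K X0 Y0 R \<longleftrightarrow>
     (\<exists>\<mu> :: (jh \<times> jh) measure.
        sets \<mu> = sets (jhspace \<Otimes>\<^sub>M jhspace) \<and>
        mdc_law K X0 \<mu> (\<lambda>\<omega>. fst (fst \<omega>)) (\<lambda>\<omega>. snd (fst \<omega>)) \<and>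
        mdc_law K Y0 \<mu> (\<lambda>\<omega>. fst (snd \<omega>)) (\<lambda>\<omega>. snd (snd \<omega>)) \<and>
        (AE \<omega> in \<mu>. R (cpath (npart X0) (fst \<omega>)) (cpath (npart Y0) (snd \<omega>))))"

end

theory Submission
  imports Defs
begin

(*
  For K(i,j) = min (phi i) (phi j) with phi positive and nondecreasing, the smallest particle
  (size l) merges with each other particle at the same rate phi l.  So from a state with
  m particles the jump chain picks a "rank" p uniformly in {2..m} and merges the smallest
  particle with the p-th smallest one, and the holding time is E / (phi l * (m - 1)) with
  E a unit exponential.

  Coupling: drive both processes with the same ranks and the same exponentials.  The hypothesis
  S_m(Y0) <= S_m(X0) for all m is equivalent to the domination of cumulative counts
  (Y0 has at least as many particles of size <= c as X0, for each c); a merge with a common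
  rank preserves this domination.  Hence the smallest size of Y is never larger than that
  of X, the Y-holding times are the longer ones, and at every time the X-process has made at
  least as many jumps.  As "no particle of size <= i" and "one particle left" persist along
  a chain, T_i and T of the X-path are at most those of the Y-path.
*)

section \<open>Sorted particle sizes and cumulative counts\<close>

text \<open>The number of particles of size at most c.  The whole argument works with these
  cumulative counts: the m-th smallest size S m X is at most c iff at least m particles have
  size at most c.\<close>
definition cumul :: "state \<Rightarrow> nat \<Rightarrow> nat" where
  "cumul X c = sum X {..c}"

lemma cumul_Suc: "cumul X (Suc c) = cumul X c + X (Suc c)"
  unfolding cumul_def by simp

lemma cumul_0: "l1N X \<Longrightarrow> cumul X 0 = 0"
  unfolding cumul_def l1N_def by simp

lemma npart_eq_sum: "l1N X \<Longrightarrow> finite A \<Longrightarrow> {i. 0 < X i} \<subseteq> A \<Longrightarrow> npart X = sum X A"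
  unfolding npart_def l1N_def by (intro sum.mono_neutral_left) auto

lemma cumul_le_npart: assumes "l1N X" shows "cumul X c \<le> npart X"
proof -
  have "cumul X c = sum X ({..c} \<inter> {i. 0 < X i})"
    unfolding cumul_def by (intro sum.mono_neutral_right) auto
  also have "\<dots> \<le> sum X {i. 0 < X i}"
    using assms unfolding l1N_def by (intro sum_mono2) auto
  finally show ?thesis unfolding npart_def .
qed

lemma member_le_npart: "l1N X \<Longrightarrow> X i \<le> npart X"
  unfolding npart_def l1N_def by (cases "X i = 0") (auto intro: member_le_sum)

lemma npart_pos_iff: "l1N X \<Longrightarrow> 1 \<le> npart X \<longleftrightarrow> (\<exists>i. 0 < X i)"
  using member_le_npart[of X] unfolding npart_def
  by (metis (no_types, lifting) le_zero_eq less_one linorder_not_less mem_Collect_eq not_gr_zero sum.neutral)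

lemma size_list_length: "l1N X \<Longrightarrow> length (size_list X) = npart X"
  unfolding size_list_def npart_def l1N_def
  by (simp add: length_concat comp_def sum_list_distinct_conv_sum_set)

lemma size_list_count_le: assumes "l1N X"
  shows "length (filter (\<lambda>x. x \<le> c) (size_list X)) = cumul X c"
proof -
  have "length (filter (\<lambda>x. x \<le> c) (size_list X)) = (\<Sum>s\<in>{s. 0 < X s}. if s \<le> c then X s else 0)"
    using assms unfolding size_list_def l1N_def
    by (simp add: filter_concat length_concat comp_def sum_list_distinct_conv_sum_set filter_replicate if_distrib[of length] cong: if_cong)
  also have "\<dots> = (\<Sum>s\<in>{s. 0 < X s} \<inter> {..c}. X s)"
    using assms unfolding l1N_def by (simp add: sum.inter_restrict)
  also have "\<dots> = cumul X c"
    unfolding cumul_def by (intro sum.mono_neutral_left) auto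
  finally show ?thesis .
qed

lemma size_list_sorted: "sorted (size_list X)"
proof -
  have "sorted (concat (map (\<lambda>s. replicate (f s) s) xs))" if "sorted xs" for f and xs :: "nat list"
    using that by (induction xs) (auto simp: sorted_append)
  then show ?thesis unfolding size_list_def by simp
qed

lemma sorted_nth_le_iff:
  fixes L :: "nat list"
  assumes "sorted L" "i < length L"
  shows "L ! i \<le> c \<longleftrightarrow> i < length (filter (\<lambda>x. x \<le> c) L)"
  using assms
proof (induction L arbitrary: i)
  case (Cons x xs)
  show ?case
  proof (cases i)
    case 0
    then show ?thesis using Cons.prems by (auto simp: filter_empty_conv)
  next
    case (Suc j)
    have IH: "xs ! j \<le> c \<longleftrightarrow> j < length (filter (\<lambda>x. x \<le> c) xs)"
      using Cons Suc by auto
    show ?thesis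
    proof (cases "x \<le> c")
      case False
      then have "filter (\<lambda>x. x \<le> c) xs = []" and "x \<le> xs ! j"
        using Cons.prems Suc by (auto simp: filter_empty_conv nth_mem)
      then show ?thesis using Suc False by simp
    qed (use Suc IH in simp)
  qed
qed simp

lemma S_le_iff: "l1N X \<Longrightarrow> 1 \<le> p \<Longrightarrow> p \<le> npart X \<Longrightarrow> S p X \<le> c \<longleftrightarrow> p \<le> cumul X c"
  unfolding S_def
  using sorted_nth_le_iff[OF size_list_sorted, of "p - 1" X c] size_list_length[of X]
    size_list_count_le[of X c]
  by auto

lemma S_eq_iff: assumes "l1N X" "1 \<le> p" "p \<le> npart X"
  shows "S p X = s \<longleftrightarrow> 1 \<le> s \<and> cumul X (s - 1) < p \<and> p \<le> cumul X s"
proof (cases s)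
  case 0
  then show ?thesis using S_le_iff[OF assms, of 0] cumul_0[OF assms(1)] assms by auto
next
  case (Suc s')
  then have "S p X = s \<longleftrightarrow> S p X \<le> s \<and> \<not> S p X \<le> s'" by auto
  then show ?thesis using S_le_iff[OF assms, of s] S_le_iff[OF assms, of s'] Suc by auto
qed

text \<open>The hypothesis of the theorem (S m Y below S m X for every rank m) says exactly that
  Y has at least as many particles of size at most c as X, for every c.\<close>
definition cumul_dom :: "state \<Rightarrow> state \<Rightarrow> bool" where
  "cumul_dom Y X \<longleftrightarrow> (\<forall>c. cumul X c \<le> cumul Y c)"

lemma S_le_imp_cumul_dom:
  assumes x: "l1N X" and y: "l1N Y" and n: "npart X = npart Y"
    and le: "\<forall>m\<in>{1..npart X}. S m Y \<le> S m X"
  shows "cumul_dom Y X"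
  unfolding cumul_dom_def
proof
  fix c
  show "cumul X c \<le> cumul Y c"
  proof (cases "cumul X c = 0")
    case False
    define a where "a = cumul X c"
    have a: "1 \<le> a" "a \<le> npart X" using False cumul_le_npart[OF x] unfolding a_def by auto
    have "S a X \<le> c" using S_le_iff[OF x a] a_def by simp
    then have "S a Y \<le> c" using le a by force
    then show ?thesis using S_le_iff[OF y a(1)] a n a_def by simp
  qed simp
qed

lemma lX_occupied: "0 < X i \<Longrightarrow> 0 < X (lX X)"
  unfolding lX_def by (rule LeastI)

lemma lX_le: "0 < X i \<Longrightarrow> lX X \<le> i"
  unfolding lX_def by (rule Least_le)

lemma lX_ge1: "l1N X \<Longrightarrow> 0 < X i \<Longrightarrow> 1 \<le> lX X"
  using lX_occupied[of X i] unfolding l1N_def by (cases "lX X") auto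

lemma cumul_pos_iff: assumes "0 < X i" shows "1 \<le> cumul X c \<longleftrightarrow> lX X \<le> c"
proof -
  have "cumul X c = 0 \<longleftrightarrow> (\<forall>u\<le>c. X u = 0)" unfolding cumul_def by auto
  then have "1 \<le> cumul X c \<longleftrightarrow> (\<exists>u\<le>c. 0 < X u)" by auto
  then show ?thesis using lX_occupied[of X i, OF assms] lX_le[of X] le_trans by blast
qed

lemma cumul_dom_lX:
  assumes x: "l1N X" "1 \<le> npart X" and y: "l1N Y" "1 \<le> npart Y" and d: "cumul_dom Y X"
  shows "lX Y \<le> lX X"
proof -
  obtain i j where "0 < X i" "0 < Y j" using x y npart_pos_iff by blast
  then show ?thesis
    using cumul_pos_iff[of X i "lX X"] cumul_pos_iff[of Y j "lX X"] d unfolding cumul_dom_def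
    by (metis le_trans order_refl)
qed

lemma S_partner: assumes x: "l1N X" and p: "2 \<le> p" "p \<le> npart X"
  shows "0 < X (S p X)" "S p X = lX X \<Longrightarrow> 2 \<le> X (S p X)"
proof -
  define s where "s = S p X"
  have e: "1 \<le> s \<and> cumul X (s - 1) < p \<and> p \<le> cumul X s"
    using S_eq_iff[OF x _ p(2), of s] p(1) s_def by auto
  then obtain s' where s': "s = Suc s'" by (cases s) auto
  have F: "cumul X s = cumul X s' + X s" using cumul_Suc[of X s'] s' by simp
  show pos: "0 < X (S p X)" using e F s' s_def by auto
  assume "S p X = lX X"
  then have "\<not> 1 \<le> cumul X s'" using cumul_pos_iff[of X "S p X" s', OF pos] s' s_def by simp
  then show "2 \<le> X (S p X)" using e F s' p(1) s_def by simp
qed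

section \<open>One coagulation step\<close>

lemma coal_sum:
  assumes "1 \<le> X l" "1 \<le> X s" "l = s \<Longrightarrow> 2 \<le> X l" "finite A"
  shows "sum (coal X l s) A + (if l \<in> A then 1 else 0) + (if s \<in> A then 1 else 0)
     = sum X A + (if l + s \<in> A then 1 else 0)"
proof -
  have "(\<Sum>u\<in>A. coal X l s u + (if u = l then 1 else 0) + (if u = s then 1 else 0))
      = (\<Sum>u\<in>A. X u + (if u = l + s then 1 else 0))"
    using assms(1-3) unfolding coal_def by (intro sum.cong) auto
  then show ?thesis using assms(4) by (simp add: sum.distrib)
qed

lemma coal_l1N_npart:
  assumes x: "l1N X" and occ: "1 \<le> X l" "1 \<le> X s" "l = s \<Longrightarrow> 2 \<le> X l"
  shows "l1N (coal X l s)" "npart (coal X l s) = npart X - 1"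
proof -
  define A where "A = {i. 0 < X i} \<union> {l + s}"
  have fin: "finite A" using x unfolding l1N_def A_def by simp
  have pos: "l \<noteq> 0" "s \<noteq> 0" using x occ(1,2) unfolding l1N_def by (metis not_one_le_zero)+
  have supp: "{i. 0 < coal X l s i} \<subseteq> A" using pos unfolding A_def coal_def by auto
  have "coal X l s 0 = 0" using x pos unfolding l1N_def coal_def by simp
  then show l1: "l1N (coal X l s)" using finite_subset[OF supp fin] unfolding l1N_def by simp
  have "l \<in> A" "s \<in> A" "l + s \<in> A" using occ unfolding A_def by auto
  then have "sum (coal X l s) A + 1 = sum X A"
    using coal_sum[of X l s A, OF occ fin] by simp
  moreover have "npart (coal X l s) = sum (coal X l s) A" using npart_eq_sum[OF l1 fin supp] .
  moreover have "npart X = sum X A" using npart_eq_sum[OF x fin] unfolding A_def by auto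
  ultimately show "npart (coal X l s) = npart X - 1" by simp
qed

lemma coal_cumul:
  assumes "1 \<le> X l" "1 \<le> X s" "l = s \<Longrightarrow> 2 \<le> X l"
  shows "cumul (coal X l s) c + (if l \<le> c then 1 else 0) + (if s \<le> c then 1 else 0)
     = cumul X c + (if l + s \<le> c then 1 else 0)"
  using coal_sum[of X l s "{..c}", OF assms] unfolding cumul_def by simp

text \<open>Ranks are clamped into {2..npart X}, so the step is
  defined for every p; for states with at least two particles, as p ranges over {2..npart X}
  the partner S p X ranges over all other particles, each exactly once.\<close>
definition rank_of :: "state \<Rightarrow> nat \<Rightarrow> nat" where
  "rank_of X p = max 2 (min p (npart X))"

definition merge_step :: "state \<Rightarrow> nat \<Rightarrow> state" where
  "merge_step X p = coal X (lX X) (S (rank_of X p) X)"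

lemma merge_step_partner: assumes x: "l1N X" "2 \<le> npart X"
  shows "1 \<le> X (lX X)" "1 \<le> X (S (rank_of X p) X)"
    "lX X = S (rank_of X p) X \<Longrightarrow> 2 \<le> X (lX X)"
proof -
  have r: "2 \<le> rank_of X p" "rank_of X p \<le> npart X" using x(2) unfolding rank_of_def by auto
  note partner = S_partner[OF x(1) r]
  show "1 \<le> X (lX X)" using lX_occupied[of X "S (rank_of X p) X", OF partner(1)] by simp
  show "1 \<le> X (S (rank_of X p) X)" using partner(1) by simp
  show "lX X = S (rank_of X p) X \<Longrightarrow> 2 \<le> X (lX X)" using partner by simp
qed

lemma merge_step_l1N: "l1N X \<Longrightarrow> 2 \<le> npart X \<Longrightarrow> l1N (merge_step X p)"
  unfolding merge_step_def using coal_l1N_npart(1) merge_step_partner by blast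

lemma merge_step_npart: "l1N X \<Longrightarrow> 2 \<le> npart X \<Longrightarrow> npart (merge_step X p) = npart X - 1"
  unfolding merge_step_def using coal_l1N_npart(2) merge_step_partner by blast

lemma merge_step_cumul: assumes x: "l1N X" "2 \<le> npart X"
  shows "cumul (merge_step X p) c + (if 1 \<le> cumul X c then 1 else 0)
           + (if rank_of X p \<le> cumul X c then 1 else 0)
         = cumul X c + (if lX X + S (rank_of X p) X \<le> c then 1 else 0)"
proof -
  have r: "1 \<le> rank_of X p" "rank_of X p \<le> npart X" using x(2) unfolding rank_of_def by auto
  have "lX X \<le> c \<longleftrightarrow> 1 \<le> cumul X c"
    using cumul_pos_iff[of X "lX X" c] merge_step_partner(1)[OF x] by simp
  moreover have "S (rank_of X p) X \<le> c \<longleftrightarrow> rank_of X p \<le> cumul X c" using S_le_iff[OF x(1) r] .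
  ultimately show ?thesis
    using coal_cumul[of X "lX X" "S (rank_of X p) X" c, OF merge_step_partner[OF x]] unfolding merge_step_def by simp
qed

text \<open>Both the smallest sizes and the partners are
  ordered, hence so are the merged sizes.\<close>
lemma merge_step_cumul_dom:
  assumes x: "l1N X" and y: "l1N Y" and n: "npart X = npart Y" "2 \<le> npart X"
    and d: "cumul_dom Y X"
  shows "cumul_dom (merge_step Y p) (merge_step X p)"
  unfolding cumul_dom_def
proof
  fix c
  have ny: "2 \<le> npart Y" using n by simp
  have r: "rank_of Y p = rank_of X p" using n unfolding rank_of_def by simp
  define q where "q = rank_of X p"
  have q: "1 \<le> q" "q \<le> npart X" "2 \<le> q" using n unfolding q_def rank_of_def by auto
  have dd: "cumul X c' \<le> cumul Y c'" for c' using d unfolding cumul_dom_def by blast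
  have "lX Y \<le> lX X" using cumul_dom_lX[OF x _ y _ d] n by simp
  moreover have "S q Y \<le> S q X"
    using S_le_iff[OF x q(1,2), of "S q X"] S_le_iff[OF y q(1), of "S q X"] n q dd[of "S q X"] by simp
  ultimately have e: "(if lX X + S q X \<le> c then 1 else 0) \<le> (if lX Y + S q Y \<le> c then 1 else (0::nat))"
    by auto
  have g: "a + (if q \<le> b then 1 else 0) + (if 1 \<le> b then 1 else 0)
     \<le> b + (if q \<le> a then 1 else 0) + (if 1 \<le> a then 1 else (0::nat))" if "a \<le> b" for a b
    using that q(3) by auto
  show "cumul (merge_step X p) c \<le> cumul (merge_step Y p) c"
    using merge_step_cumul[OF x n(2), of p c] merge_step_cumul[OF y ny, of p c] g[OF dd[of c]] e
    unfolding r q_def[symmetric] by linarith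
qed

lemma merge_step_cumul_zero:
  assumes x: "l1N X" "2 \<le> npart X" and z: "cumul X c = 0"
  shows "cumul (merge_step X p) c = 0"
proof -
  have "\<not> lX X \<le> c"
    using cumul_pos_iff[of X "lX X" c] merge_step_partner(1)[OF x] z by simp
  then show ?thesis using merge_step_cumul[OF x, of p c] z by simp
qed

section \<open>Jump rates of the min-kernel in terms of ranks\<close>

definition partners :: "state \<Rightarrow> nat \<Rightarrow> nat" where
  "partners X s = X s - (if s = lX X then 1 else 0)"

lemma partners_sum: assumes x: "l1N X" "1 \<le> npart X"
  shows "(\<Sum>s\<in>{i. 0 < X i}. partners X s) = npart X - 1"
proof -
  obtain i where i: "0 < X i" using x npart_pos_iff by blast
  have fin: "finite {i. 0 < X i}" using x unfolding l1N_def by simp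
  have l: "lX X \<in> {i. 0 < X i}" using lX_occupied[of X i, OF i] by simp
  have "(\<Sum>s\<in>{i. 0 < X i}. partners X s) + 1 = (\<Sum>s\<in>{i. 0 < X i}. partners X s + (if s = lX X then 1 else 0))"
    using fin l by (simp add: sum.distrib)
  also have "\<dots> = npart X"
    unfolding npart_def partners_def using l by (intro sum.cong) auto
  finally show ?thesis by simp
qed

lemma card_ranks_of_size: assumes x: "l1N X" "2 \<le> npart X"
  shows "card {p\<in>{2..npart X}. S p X = s} = partners X s"
proof -
  obtain i where i: "0 < X i" using x npart_pos_iff by fastforce
  have lge: "1 \<le> lX X" using lX_ge1[OF x(1) i] .
  show ?thesis
  proof (cases s)
    case 0
    have "{p\<in>{2..npart X}. S p X = s} = {}" using S_eq_iff[OF x(1), of _ s] 0 by auto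
    then show ?thesis using 0 x(1) lge unfolding l1N_def partners_def by auto
  next
    case (Suc s')
    have FS: "cumul X s = cumul X s' + X s" using cumul_Suc[of X s'] Suc by simp
    have "{p\<in>{2..npart X}. S p X = s} = {max 2 (cumul X s' + 1) .. cumul X s}"
      using S_eq_iff[OF x(1), of _ s] Suc cumul_le_npart[OF x(1), of s] by auto
    then have c: "card {p\<in>{2..npart X}. S p X = s} = cumul X s + 1 - max 2 (cumul X s' + 1)"
      by simp
    have e1: "lX X \<le> s' \<longleftrightarrow> 1 \<le> cumul X s'" and e2: "lX X \<le> s \<longleftrightarrow> 1 \<le> cumul X s"
      using cumul_pos_iff[of X i, OF i] by auto
    show ?thesis
    proof (cases "lX X \<le> s'")
      case True
      then have "1 \<le> cumul X s'" "s \<noteq> lX X" using e1 Suc by auto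
      then show ?thesis unfolding c FS partners_def by simp
    next
      case below: False
      then have z: "cumul X s' = 0" using e1 by simp
      show ?thesis
      proof (cases "lX X \<le> s")
        case True
        then have "s = lX X" using below Suc by simp
        then show ?thesis using lX_occupied[of X i, OF i] unfolding c FS z partners_def by simp
      next
        case False
        then have "X s = 0" "s \<noteq> lX X" using e2 FS by auto
        then show ?thesis unfolding c FS z partners_def by simp
      qed
    qed
  qed
qed

lemma merge_step_eq: "2 \<le> p \<Longrightarrow> p \<le> npart X \<Longrightarrow> merge_step X p = coal X (lX X) (S p X)"
  unfolding merge_step_def rank_of_def by (simp add: max_def min_def)

lemma card_ranks_to: assumes x: "l1N X" "2 \<le> npart X"
  shows "card {p\<in>{2..npart X}. merge_step X p = Y}
     = (\<Sum>s\<in>{i. 0 < X i}. if coal X (lX X) s = Y then partners X s else 0)"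
proof -
  define A where "A s = {p\<in>{2..npart X}. S p X = s \<and> coal X (lX X) s = Y}" for s
  have fin: "finite {i. 0 < X i}" using x(1) unfolding l1N_def by simp
  have "{p\<in>{2..npart X}. merge_step X p = Y} = (\<Union>s\<in>{i. 0 < X i}. A s)"
  proof (intro equalityI subsetI)
    fix p assume p: "p \<in> {p\<in>{2..npart X}. merge_step X p = Y}"
    then have "2 \<le> p" "p \<le> npart X" by auto
    then show "p \<in> (\<Union>s\<in>{i. 0 < X i}. A s)"
      using p S_partner(1)[OF x(1)] merge_step_eq unfolding A_def by fastforce
  qed (auto simp: A_def merge_step_eq)
  moreover have "card (\<Union>s\<in>{i. 0 < X i}. A s) = (\<Sum>s\<in>{i. 0 < X i}. card (A s))"
    using fin by (intro card_UN_disjoint) (auto simp: A_def)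
  ultimately have "card {p\<in>{2..npart X}. merge_step X p = Y} = (\<Sum>s\<in>{i. 0 < X i}. card (A s))"
    by simp
  also have "\<dots> = (\<Sum>s\<in>{i. 0 < X i}. if coal X (lX X) s = Y then partners X s else 0)"
    using card_ranks_of_size[OF x] unfolding A_def by (intro sum.cong) auto
  finally show ?thesis .
qed

lemma Kphi_eq: "mono_on {1..} \<phi> \<Longrightarrow> 1 \<le> l \<Longrightarrow> l \<le> j \<Longrightarrow> Kphi \<phi> l j = \<phi> l"
  unfolding Kphi_def by (auto simp: mono_on_def min_def)

text \<open>For the min-kernel with phi nondecreasing every possible partner of the smallest particle
  (of size l) is chosen at the same rate phi l.\<close>
lemma min_kernel_rate_sum:
  assumes incr: "mono_on {1..} \<phi>" and x: "l1N X" and i: "0 < X i"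
  defines "l \<equiv> lX X"
  shows "(\<Sum>j\<in>{j. l < j \<and> 0 < X j}. if P j then Kphi \<phi> l j * real (X j) else 0)
           + (if P l then Kphi \<phi> l l * (real (X l) - 1) else 0)
         = \<phi> l * real (\<Sum>s\<in>{i. 0 < X i}. if P s then partners X s else 0)"
proof -
  define f where "f s = (if P s then \<phi> l * real (partners X s) else 0)" for s
  have l1: "1 \<le> l" and occ: "0 < X l" using lX_ge1[OF x i] lX_occupied[of X i, OF i] l_def by auto
  have fin: "finite {i. 0 < X i}" using x unfolding l1N_def by simp
  have supp: "{i. 0 < X i} = insert l {j. l < j \<and> 0 < X j}"
  proof (intro set_eqI iffI)
    fix s assume "s \<in> {i. 0 < X i}"
    then show "s \<in> insert l {j. l < j \<and> 0 < X j}" using lX_le[of X s] unfolding l_def by auto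
  qed (use occ in auto)
  have "(\<Sum>j\<in>{j. l < j \<and> 0 < X j}. if P j then Kphi \<phi> l j * real (X j) else 0)
      = (\<Sum>j\<in>{j. l < j \<and> 0 < X j}. f j)"
    using Kphi_eq[OF incr l1] unfolding f_def partners_def l_def by (intro sum.cong) auto
  moreover have "(if P l then Kphi \<phi> l l * (real (X l) - 1) else 0) = f l"
    using Kphi_eq[OF incr l1] occ unfolding f_def partners_def l_def by (simp add: of_nat_diff)
  moreover have "(\<Sum>j\<in>{j. l < j \<and> 0 < X j}. f j) + f l = (\<Sum>s\<in>{i. 0 < X i}. f s)"
    using fin unfolding supp by (simp add: add.commute)
  ultimately show ?thesis unfolding f_def of_nat_sum sum_distrib_left
    by (simp add: if_distrib[of real] if_distrib[of "(*) (\<phi> l)"] cong: if_cong)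
qed

lemma qrate_min_kernel: assumes incr: "mono_on {1..} \<phi>" and x: "l1N X" "2 \<le> npart X"
  shows "qrate (Kphi \<phi>) X Y = \<phi> (lX X) * real (card {p\<in>{2..npart X}. merge_step X p = Y})"
proof -
  obtain i where "0 < X i" using x npart_pos_iff by fastforce
  from min_kernel_rate_sum[OF incr x(1) this, of "\<lambda>s. Y = coal X (lX X) s"]
  show ?thesis unfolding qrate_def card_ranks_to[OF x] by (simp add: eq_commute)
qed

lemma qtot_min_kernel: assumes incr: "mono_on {1..} \<phi>" and x: "l1N X" "2 \<le> npart X"
  shows "qtot (Kphi \<phi>) X = \<phi> (lX X) * real (npart X - 1)"
proof -
  obtain i where "0 < X i" using x npart_pos_iff by fastforce
  from min_kernel_rate_sum[OF incr x(1) this, of "\<lambda>_. True"]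
  show ?thesis unfolding qtot_def using partners_sum[OF x(1)] x(2) by simp
qed

lemma jump_prob_min_kernel:
  assumes pos: "\<forall>i\<ge>1. 0 < \<phi> i" and incr: "mono_on {1..} \<phi>" and x: "l1N X" "2 \<le> npart X"
  shows "qrate (Kphi \<phi>) X Y / qtot (Kphi \<phi>) X
           = real (card {p\<in>{2..npart X}. merge_step X p = Y}) / real (npart X - 1)"
    and "0 < qtot (Kphi \<phi>) X"
proof -
  obtain i where i: "0 < X i" using x npart_pos_iff by fastforce
  have "0 < \<phi> (lX X)" using pos lX_ge1[OF x(1) i] by simp
  then show "qrate (Kphi \<phi>) X Y / qtot (Kphi \<phi>) X
           = real (card {p\<in>{2..npart X}. merge_step X p = Y}) / real (npart X - 1)"
    and "0 < qtot (Kphi \<phi>) X"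
    using qrate_min_kernel[OF incr x] qtot_min_kernel[OF incr x] x(2) by auto
qed

section \<open>The rank-driven jump chain and the pathwise comparison\<close>

fun rank_chain :: "nat \<Rightarrow> state \<Rightarrow> (nat \<Rightarrow> nat) \<Rightarrow> nat \<Rightarrow> state" where
  "rank_chain n X0 r 0 = X0"
| "rank_chain n X0 r (Suc k) =
     (if k < n - 1 then merge_step (rank_chain n X0 r k) (r k) else rank_chain n X0 r k)"

lemma rank_chain_valid: assumes "l1N X0" "npart X0 = n"
  shows "k \<le> n - 1 \<Longrightarrow> l1N (rank_chain n X0 r k) \<and> npart (rank_chain n X0 r k) = n - k"
proof (induction k)
  case (Suc k)
  then have "l1N (rank_chain n X0 r k)" "npart (rank_chain n X0 r k) = n - k" "k < n - 1" by auto
  then show ?case using merge_step_l1N merge_step_npart by simp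
qed (use assms in simp)

lemma rank_chain_stops: "n - 1 \<le> k \<Longrightarrow> rank_chain n X0 r k = rank_chain n X0 r (n - 1)"
proof (induction k)
  case (Suc k)
  then show ?case by (cases "n - 1 \<le> k") (auto simp: le_Suc_eq)
qed simp

lemma rank_chain_l1N: assumes "l1N X0" "npart X0 = n" shows "l1N (rank_chain n X0 r k)"
proof (cases "k \<le> n - 1")
  case False
  then show ?thesis using rank_chain_valid[OF assms, of "n - 1"] rank_chain_stops[of n k] by simp
qed (use rank_chain_valid[OF assms] in blast)

lemma rank_chain_cumul_dom:
  assumes x: "l1N X0" "npart X0 = n" and y: "l1N Y0" "npart Y0 = n" and d: "cumul_dom Y0 X0"
  shows "cumul_dom (rank_chain n Y0 r k) (rank_chain n X0 r k)"
proof (induction k)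
  case (Suc k)
  show ?case
  proof (cases "k < n - 1")
    case True
    then have "l1N (rank_chain n X0 r k)" "npart (rank_chain n X0 r k) = n - k"
      "l1N (rank_chain n Y0 r k)" "npart (rank_chain n Y0 r k) = n - k"
      using rank_chain_valid[OF x, of k] rank_chain_valid[OF y, of k] by auto
    then show ?thesis using merge_step_cumul_dom Suc.IH True by simp
  qed (use Suc.IH in simp)
qed (use d in simp)

lemma rank_chain_cumul_zero:
  assumes x: "l1N X0" "npart X0 = n" and z: "cumul (rank_chain n X0 r k) c = 0" and "k \<le> k'"
  shows "cumul (rank_chain n X0 r k') c = 0"
  using \<open>k \<le> k'\<close>
proof (induction k' rule: dec_induct)
  case (step k')
  show ?case
  proof (cases "k' < n - 1")
    case True
    then have "l1N (rank_chain n X0 r k')" "2 \<le> npart (rank_chain n X0 r k')"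
      using rank_chain_valid[OF x, of k'] by auto
    then show ?thesis using merge_step_cumul_zero step.IH True by simp
  qed (use step.IH in simp)
qed (use z in simp)

definition njumps :: "nat \<Rightarrow> (nat \<Rightarrow> real) \<Rightarrow> real \<Rightarrow> nat" where
  "njumps n h t = card {j. j < n - 1 \<and> (\<Sum>i\<le>j. h i) \<le> t}"

lemma cpath_njumps: "cpath n (z, h) t = z (njumps n h t)"
  unfolding cpath_def njumps_def by simp

lemma njumps_le: "njumps n h t \<le> n - 1"
  unfolding njumps_def by (rule order_trans[OF card_mono[of "{..<n-1}"]]) auto

lemma njumps_antimono: assumes "\<forall>j<n - 1. hX j \<le> hY j" shows "njumps n hY t \<le> njumps n hX t"
  unfolding njumps_def
proof (rule card_mono)
  have "(\<Sum>i\<le>j. hX i) \<le> (\<Sum>i\<le>j. hY i)" if "j < n - 1" for j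
    using assms that by (intro sum_mono) auto
  then show "{j. j < n - 1 \<and> (\<Sum>i\<le>j. hY i) \<le> t} \<subseteq> {j. j < n - 1 \<and> (\<Sum>i\<le>j. hX i) \<le> t}"
    by force
qed simp

lemma no_small_iff_cumul: assumes "l1N Z" shows "(\<forall>m\<in>{1..i}. Z m = 0) \<longleftrightarrow> cumul Z i = 0"
proof -
  have "Z m = 0" if "\<forall>m\<in>{1..i}. Z m = 0" "m \<le> i" for m
    using assms that unfolding l1N_def by (cases "m = 0") auto
  then have "(\<forall>m\<in>{1..i}. Z m = 0) \<longleftrightarrow> (\<forall>m\<le>i. Z m = 0)" by auto
  then show ?thesis unfolding cumul_def by auto
qed

text \<open>At each time the X-path has made at
  least as many jumps, and both "no particle of size at most i" and absorption persist along
  a chain, so the X-path reaches them first.\<close>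
lemma path_comparison_Tsub:
  assumes x: "l1N X0" "npart X0 = n" and y: "l1N Y0" "npart Y0 = n" and d: "cumul_dom Y0 X0"
    and h: "\<forall>j<n - 1. hX j \<le> hY j"
  shows "Tsub i (cpath n (rank_chain n X0 r, hX)) \<le> Tsub i (cpath n (rank_chain n Y0 r, hY))"
proof -
  have "t > 0 \<and> (\<forall>m\<in>{1..i}. cpath n (rank_chain n X0 r, hX) t m = 0)"
    if t: "t > 0" and z: "\<forall>m\<in>{1..i}. cpath n (rank_chain n Y0 r, hY) t m = 0" for t
  proof -
    define a b where "a = njumps n hY t" and "b = njumps n hX t"
    have "cumul (rank_chain n Y0 r a) i = 0"
      using z no_small_iff_cumul[OF rank_chain_l1N[OF y]] unfolding cpath_njumps a_def by blast
    then have "cumul (rank_chain n X0 r a) i = 0"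
      using rank_chain_cumul_dom[OF x y d, of r a] unfolding cumul_dom_def by (metis le_zero_eq)
    then have "cumul (rank_chain n X0 r b) i = 0"
      using rank_chain_cumul_zero[OF x] njumps_antimono[OF h] unfolding a_def b_def by blast
    then show ?thesis
      using t no_small_iff_cumul[OF rank_chain_l1N[OF x]] unfolding cpath_njumps b_def by blast
  qed
  then have "{t. 0 < t \<and> (\<forall>m\<in>{1..i}. cpath n (rank_chain n Y0 r, hY) t m = 0)}
      \<subseteq> {t. 0 < t \<and> (\<forall>m\<in>{1..i}. cpath n (rank_chain n X0 r, hX) t m = 0)}" by blast
  then show ?thesis unfolding Tsub_def by (intro Inf_superset_mono image_mono)
qed

lemma path_comparison_Tabs:
  assumes x: "l1N X0" "npart X0 = n" and y: "l1N Y0" "npart Y0 = n" and n: "1 \<le> n"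
    and h: "\<forall>j<n - 1. hX j \<le> hY j"
  shows "Tabs (cpath n (rank_chain n X0 r, hX)) \<le> Tabs (cpath n (rank_chain n Y0 r, hY))"
proof -
  have "npart (cpath n (rank_chain n X0 r, hX) t) = 1"
    if "npart (cpath n (rank_chain n Y0 r, hY) t) = 1" for t
  proof -
    define a b where "a = njumps n hY t" and "b = njumps n hX t"
    have ab: "a \<le> b" "a \<le> n - 1" "b \<le> n - 1"
      using njumps_antimono[OF h] njumps_le unfolding a_def b_def by auto
    have "n - a = 1" using that rank_chain_valid[OF y ab(2)] unfolding cpath_njumps a_def by simp
    then have "b = n - 1" using ab by simp
    then show ?thesis using rank_chain_valid[OF x, of b] n unfolding cpath_njumps b_def by simp
  qed
  then have "{t. 0 \<le> t \<and> npart (cpath n (rank_chain n Y0 r, hY) t) = 1}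
      \<subseteq> {t. 0 \<le> t \<and> npart (cpath n (rank_chain n X0 r, hX) t) = 1}" by blast
  then show ?thesis unfolding Tabs_def by (intro Inf_superset_mono image_mono)
qed

section \<open>The noise space\<close>

definition exp1 :: "real measure" where
  "exp1 = density lborel (exponential_density 1)"

lemma prob_space_exp1: "prob_space exp1"
  unfolding exp1_def by (rule prob_space_exponential_density) simp

lemma sets_exp1 [measurable_cong]: "sets exp1 = sets borel"
  unfolding exp1_def by simp

lemma space_exp1: "space exp1 = UNIV"
  unfolding exp1_def by simp

lemma exp1_tail: assumes "0 \<le> a" shows "measure exp1 {e. a < e} = exp (- a)"
proof -
  interpret prob_space exp1 by (rule prob_space_exp1)
  have "emeasure exp1 {..a} = ennreal (erlang_CDF 0 1 a)"
    unfolding exp1_def by (rule emeasure_erlang_density) simp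
  then have "measure exp1 {..a} = 1 - exp (- a)"
    using assms by (simp add: emeasure_eq_measure erlang_CDF_0 measure_nonneg)
  moreover have "{e. a < e} = space exp1 - {..a}" by (auto simp: space_exp1)
  ultimately show ?thesis by (simp add: prob_compl sets_exp1)
qed

text \<open>The rank used at the j-th jump of a process with n particles: uniform on {2..n-j},
  i.e. on the partners available when n - j particles are left.\<close>
definition rank_pmf :: "nat \<Rightarrow> nat \<Rightarrow> nat pmf" where
  "rank_pmf n j = pmf_of_set {2..max 2 (n - j)}"

definition noise_coord :: "nat \<Rightarrow> nat \<Rightarrow> (nat \<times> real) measure" where
  "noise_coord n j = measure_pmf (rank_pmf n j) \<Otimes>\<^sub>M exp1"

definition noise :: "nat \<Rightarrow> (nat \<Rightarrow> nat \<times> real) measure" where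
  "noise n = PiM UNIV (noise_coord n)"

lemma product_prob_space_noise: "product_prob_space (noise_coord n)"
  unfolding noise_coord_def
  by (intro product_prob_spaceI prob_space_pair prob_space_measure_pmf prob_space_exp1)

lemma prob_space_noise: "prob_space (noise n)"
proof -
  interpret product_prob_space "noise_coord n" UNIV by (rule product_prob_space_noise)
  show ?thesis unfolding noise_def by (rule prob_space_axioms)
qed

lemma space_noise_coord: "space (noise_coord n j) = UNIV"
  unfolding noise_coord_def by (simp add: space_pair_measure space_exp1)

lemma space_noise: "space (noise n) = UNIV"
  unfolding noise_def space_PiM space_noise_coord by simp

lemma measure_noise_coord_Times: assumes "C \<in> sets borel"
  shows "measure (noise_coord n j) (A \<times> C) = measure (rank_pmf n j) A * measure exp1 C"
proof -
  interpret sigma_finite_measure exp1 using prob_space_exp1 by (rule prob_space_imp_sigma_finite)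
  have "emeasure (noise_coord n j) (A \<times> C) = emeasure (rank_pmf n j) A * emeasure exp1 C"
    unfolding noise_coord_def using assms
    by (intro emeasure_pair_measure_Times) (auto simp: sets_exp1)
  then show ?thesis by (simp add: measure_def enn2real_mult)
qed

lemma noise_component_measurable: "(\<lambda>\<omega>. \<omega> j) \<in> noise n \<rightarrow>\<^sub>M noise_coord n j"
  unfolding noise_def by (rule measurable_component_singleton) simp

lemma noise_rank_measurable: "(\<lambda>\<omega>. fst (\<omega> j)) \<in> noise n \<rightarrow>\<^sub>M count_space UNIV"
proof -
  have "fst \<in> noise_coord n j \<rightarrow>\<^sub>M measure_pmf (rank_pmf n j)"
    unfolding noise_coord_def by (rule measurable_fst)
  then have "fst \<in> noise_coord n j \<rightarrow>\<^sub>M count_space UNIV"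
    by (subst (asm) measurable_cong_sets[OF refl sets_measure_pmf_count_space])
  with noise_component_measurable show ?thesis by (rule measurable_compose)
qed

lemma noise_exp_measurable: "(\<lambda>\<omega>. snd (\<omega> j)) \<in> borel_measurable (noise n)"
proof -
  have "snd \<in> noise_coord n j \<rightarrow>\<^sub>M exp1" unfolding noise_coord_def by (rule measurable_snd)
  then have "snd \<in> borel_measurable (noise_coord n j)"
    by (subst (asm) measurable_cong_sets[OF refl sets_exp1])
  with noise_component_measurable show ?thesis by (rule measurable_compose)
qed

abbreviation noise_chain :: "nat \<Rightarrow> state \<Rightarrow> (nat \<Rightarrow> nat \<times> real) \<Rightarrow> nat \<Rightarrow> state" where
  "noise_chain n X0 \<omega> \<equiv> rank_chain n X0 (\<lambda>j. fst (\<omega> j))"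

lemma noise_chain_measurable: "(\<lambda>\<omega>. noise_chain n X0 \<omega> k) \<in> noise n \<rightarrow>\<^sub>M count_space UNIV"
proof (induction k)
  case (Suc k)
  have "(\<lambda>\<omega>. if k < n - 1 then merge_step (noise_chain n X0 \<omega> k) p else noise_chain n X0 \<omega> k)
      \<in> noise n \<rightarrow>\<^sub>M count_space UNIV" for p
    using measurable_compose[OF Suc.IH, of "\<lambda>z. if k < n - 1 then merge_step z p else z"] by simp
  then show ?case
    by (simp only: rank_chain.simps) (rule measurable_compose_countable'[OF _ noise_rank_measurable], auto)
qed simp

definition holding :: "(nat \<Rightarrow> nat \<Rightarrow> real) \<Rightarrow> nat \<Rightarrow> state \<Rightarrow> (nat \<Rightarrow> nat \<times> real) \<Rightarrow> nat \<Rightarrow> real" where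
  "holding K n X0 \<omega> j = max 0 (snd (\<omega> j)) / qtot K (noise_chain n X0 \<omega> j)"

definition jh_of_noise :: "(nat \<Rightarrow> nat \<Rightarrow> real) \<Rightarrow> nat \<Rightarrow> state \<Rightarrow> (nat \<Rightarrow> nat \<times> real) \<Rightarrow> jh" where
  "jh_of_noise K n X0 \<omega> = (noise_chain n X0 \<omega>, holding K n X0 \<omega>)"

lemma holding_measurable: "(\<lambda>\<omega>. holding K n X0 \<omega> j) \<in> borel_measurable (noise n)"
  unfolding holding_def
proof (rule borel_measurable_divide)
  show "(\<lambda>\<omega>. max 0 (snd (\<omega> j))) \<in> borel_measurable (noise n)"
    by (intro borel_measurable_max borel_measurable_const noise_exp_measurable)
  show "(\<lambda>\<omega>. qtot K (noise_chain n X0 \<omega> j)) \<in> borel_measurable (noise n)"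
    by (rule measurable_compose[OF noise_chain_measurable]) simp
qed

lemma jh_of_noise_measurable: "jh_of_noise K n X0 \<in> noise n \<rightarrow>\<^sub>M jhspace"
  unfolding jhspace_def jh_of_noise_def
proof (rule measurable_Pair)
  show "noise_chain n X0 \<in> noise n \<rightarrow>\<^sub>M Pi\<^sub>M UNIV (\<lambda>_. count_space UNIV)"
    using noise_chain_measurable by (intro measurable_PiM_single') auto
  show "holding K n X0 \<in> noise n \<rightarrow>\<^sub>M Pi\<^sub>M UNIV (\<lambda>_. borel)"
    using holding_measurable by (intro measurable_PiM_single') auto
qed

lemma jhspace_chain_measurable: "(\<lambda>z::jh. fst z j) \<in> jhspace \<rightarrow>\<^sub>M count_space UNIV"
  unfolding jhspace_def
  by (rule measurable_compose[OF measurable_fst measurable_component_singleton]) simp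

lemma jhspace_holding_measurable: "(\<lambda>z::jh. snd z j) \<in> borel_measurable jhspace"
  unfolding jhspace_def
  by (rule measurable_compose[OF measurable_snd measurable_component_singleton]) simp

lemma one_jump_prob:
  fixes \<phi> :: "nat \<Rightarrow> real"
  assumes pos: "\<forall>i\<ge>1. 0 < \<phi> i" and incr: "mono_on {1..} \<phi>"
    and z: "l1N Z" "npart Z = n - j" and j: "j < n - 1" and t: "0 \<le> t"
  shows "measure (rank_pmf n j) {p. merge_step Z p = Z'}
           * measure exp1 {e. t < max 0 e / qtot (Kphi \<phi>) Z}
         = qrate (Kphi \<phi>) Z Z' / qtot (Kphi \<phi>) Z * exp (- qtot (Kphi \<phi>) Z * t)"
proof -
  define q where "q = qtot (Kphi \<phi>) Z"
  have z2: "2 \<le> npart Z" using z j by simp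
  have q: "0 < q" using jump_prob_min_kernel(2)[OF pos incr z(1) z2] q_def by simp
  have "rank_pmf n j = pmf_of_set {2..npart Z}" unfolding rank_pmf_def using z z2 by simp
  moreover have "{2..npart Z} \<inter> {p. merge_step Z p = Z'} = {p\<in>{2..npart Z}. merge_step Z p = Z'}"
    by auto
  ultimately have "measure (rank_pmf n j) {p. merge_step Z p = Z'}
      = real (card {p\<in>{2..npart Z}. merge_step Z p = Z'}) / real (npart Z - 1)"
    using z2 by (simp add: measure_pmf_of_set)
  also have "\<dots> = qrate (Kphi \<phi>) Z Z' / q"
    using jump_prob_min_kernel(1)[OF pos incr z(1) z2] q_def by simp
  finally have rank: "measure (rank_pmf n j) {p. merge_step Z p = Z'} = qrate (Kphi \<phi>) Z Z' / q" .
  have "{e. t < max 0 e / q} = {e. q * t < e}"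
  proof (intro set_eqI iffI; simp)
    fix e assume "t < max 0 e / q"
    then have "q * t < max 0 e" using q by (simp add: field_simps)
    moreover have "0 \<le> q * t" using q t by simp
    ultimately show "q * t < e" by (simp add: max_def split: if_splits)
  next
    fix e assume "q * t < e"
    then have "q * t < max 0 e" by simp
    then show "t < max 0 e / q" using q by (simp add: field_simps)
  qed
  then have "measure exp1 {e. t < max 0 e / q} = exp (- (q * t))"
    using exp1_tail[of "q * t"] q t by simp
  with rank show ?thesis unfolding q_def by simp
qed

lemma rank_step_reached:
  assumes z: "l1N Z" "2 \<le> npart Z" and m: "measure (rank_pmf n j) {p. merge_step Z p = Z'} \<noteq> 0"
  shows "l1N Z'" "npart Z' = npart Z - 1"
proof -
  have "{p. merge_step Z p = Z'} \<noteq> {}" using m by (metis measure_empty)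
  then obtain p where "merge_step Z p = Z'" by blast
  then show "l1N Z'" "npart Z' = npart Z - 1" using merge_step_l1N[OF z] merge_step_npart[OF z] by auto
qed

lemma noise_product_formula:
  fixes \<phi> :: "nat \<Rightarrow> real"
  assumes pos: "\<forall>i\<ge>1. 0 < \<phi> i" and incr: "mono_on {1..} \<phi>"
    and x: "l1N X0" "npart X0 = n" and z0: "zs 0 = X0" and t: "\<forall>j. 0 \<le> t j"
  defines "a \<equiv> \<lambda>j. measure (rank_pmf n j) {p. merge_step (zs j) p = zs (Suc j)}
              * measure exp1 {e. t j < max 0 e / qtot (Kphi \<phi>) (zs j)}"
    and "b \<equiv> \<lambda>j. qrate (Kphi \<phi>) (zs j) (zs (Suc j)) / qtot (Kphi \<phi>) (zs j)
              * exp (- qtot (Kphi \<phi>) (zs j) * t j)"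
  shows "k \<le> n - 1 \<Longrightarrow> (\<Prod>j<k. a j) = (\<Prod>j<k. b j)
           \<and> ((\<Prod>j<k. a j) \<noteq> 0 \<longrightarrow> l1N (zs k) \<and> npart (zs k) = n - k)"
proof (induction k)
  case (Suc k)
  have k: "k < n - 1" using Suc.prems by simp
  note IH = conjunct1[OF Suc.IH] conjunct2[OF Suc.IH]
  show ?case
  proof (cases "(\<Prod>j<k. a j) = 0")
    case False
    then have v: "l1N (zs k)" "npart (zs k) = n - k" using IH(2) k by auto
    have "a k = b k" unfolding a_def b_def using one_jump_prob[OF pos incr v k] t by simp
    then have "(\<Prod>j<Suc k. a j) = (\<Prod>j<Suc k. b j)" using IH(1) k by simp
    moreover have "l1N (zs (Suc k)) \<and> npart (zs (Suc k)) = n - Suc k" if "(\<Prod>j<Suc k. a j) \<noteq> 0"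
    proof -
      have "a k \<noteq> 0" using that by simp
      then show ?thesis using rank_step_reached[OF v(1)] v k unfolding a_def by auto
    qed
    ultimately show ?thesis by blast
  qed (use IH(1) k in simp)
qed (use x z0 in simp)

lemma rank_chain_follows_iff: assumes z0: "zs 0 = X0" and k: "k \<le> n - 1"
  shows "(\<forall>j\<in>{1..k}. rank_chain n X0 r j = zs j) \<longleftrightarrow> (\<forall>j<k. merge_step (zs j) (r j) = zs (Suc j))"
  using k
proof (induction k)
  case (Suc k)
  have IH: "(\<forall>j\<in>{1..k}. rank_chain n X0 r j = zs j) \<longleftrightarrow> (\<forall>j<k. merge_step (zs j) (r j) = zs (Suc j))"
    and k: "k < n - 1" using Suc by auto
  have "(\<forall>j\<in>{1..Suc k}. rank_chain n X0 r j = zs j)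
      \<longleftrightarrow> (\<forall>j\<in>{1..k}. rank_chain n X0 r j = zs j) \<and> rank_chain n X0 r (Suc k) = zs (Suc k)"
    by (subst atLeastAtMostSuc_conv) (auto simp del: rank_chain.simps)
  moreover have "(\<forall>j<Suc k. merge_step (zs j) (r j) = zs (Suc j))
      \<longleftrightarrow> (\<forall>j<k. merge_step (zs j) (r j) = zs (Suc j)) \<and> merge_step (zs k) (r k) = zs (Suc k)"
    by (auto simp: less_Suc_eq)
  moreover have "(\<forall>j\<in>{1..k}. rank_chain n X0 r j = zs j) \<Longrightarrow> rank_chain n X0 r k = zs k"
    using z0 by (cases k) (auto simp del: rank_chain.simps(2))
  ultimately show ?case using IH k by auto
qed simp

lemma noise_event_cylinder:
  fixes t :: "nat \<Rightarrow> real" and K :: "nat \<Rightarrow> nat \<Rightarrow> real"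
  assumes z0: "zs 0 = X0" and k: "k \<le> n - 1"
  defines "A \<equiv> \<lambda>j. {p. merge_step (zs j) p = zs (Suc j)}"
    and "C \<equiv> \<lambda>j. {e. t j < max 0 e / qtot K (zs j)}"
  shows "{\<omega>\<in>space (noise n). (\<forall>j\<in>{1..k}. noise_chain n X0 \<omega> j = zs j)
              \<and> (\<forall>j<k. t j < holding K n X0 \<omega> j)}
      = prod_emb UNIV (noise_coord n) {..<k} (Pi\<^sub>E {..<k} (\<lambda>j. A j \<times> C j))"
proof -
  have "prod_emb UNIV (noise_coord n) {..<k} (Pi\<^sub>E {..<k} (\<lambda>j. A j \<times> C j))
      = {\<omega>. \<forall>j<k. \<omega> j \<in> A j \<times> C j}"
  proof (subst prod_emb_PiE)
    show "(\<Pi>\<^sub>E j\<in>UNIV. if j \<in> {..<k} then A j \<times> C j else space (noise_coord n j))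
        = {\<omega>. \<forall>j<k. \<omega> j \<in> A j \<times> C j}"
    proof (intro set_eqI iffI)
      fix \<omega> assume "\<omega> \<in> (\<Pi>\<^sub>E j\<in>UNIV. if j \<in> {..<k} then A j \<times> C j else space (noise_coord n j))"
      then have w: "\<omega> j \<in> (if j \<in> {..<k} then A j \<times> C j else space (noise_coord n j))" for j
        by (auto simp: PiE_iff)
      have "\<omega> j \<in> A j \<times> C j" if "j < k" for j using w[of j] that by simp
      then show "\<omega> \<in> {\<omega>. \<forall>j<k. \<omega> j \<in> A j \<times> C j}" by auto
    qed (auto simp: PiE_iff space_noise_coord)
  qed (auto simp: space_noise_coord)
  moreover have "(\<forall>j\<in>{1..k}. noise_chain n X0 \<omega> j = zs j) \<and> (\<forall>j<k. t j < holding K n X0 \<omega> j)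
       \<longleftrightarrow> (\<forall>j<k. \<omega> j \<in> A j \<times> C j)" for \<omega>
  proof -
    have follows: "(\<forall>j\<in>{1..k}. noise_chain n X0 \<omega> j = zs j) \<longleftrightarrow> (\<forall>j<k. fst (\<omega> j) \<in> A j)"
      using rank_chain_follows_iff[where zs=zs and r="\<lambda>j. fst (\<omega> j)", OF z0 k] unfolding A_def by simp
    have "noise_chain n X0 \<omega> j = zs j"
      if "\<forall>j\<in>{1..k}. noise_chain n X0 \<omega> j = zs j" "j < k" for j
      using that z0 by (cases j) (auto simp del: rank_chain.simps(2))
    then show ?thesis
      using follows unfolding C_def holding_def by (auto simp: mem_Times_iff)
  qed
  ultimately show ?thesis unfolding space_noise by auto
qed

lemma noise_event_measure:
  fixes \<phi> :: "nat \<Rightarrow> real"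
  assumes pos: "\<forall>i\<ge>1. 0 < \<phi> i" and incr: "mono_on {1..} \<phi>"
    and x: "l1N X0" "npart X0 = n" and k: "k \<le> n - 1" and z0: "zs 0 = X0" and t: "\<forall>j. 0 \<le> t j"
  shows "measure (noise n) {\<omega>\<in>space (noise n). (\<forall>j\<in>{1..k}. noise_chain n X0 \<omega> j = zs j)
              \<and> (\<forall>j<k. t j < holding (Kphi \<phi>) n X0 \<omega> j)}
     = (\<Prod>j\<in>{1..k}. qrate (Kphi \<phi>) (zs (j - 1)) (zs j) / qtot (Kphi \<phi>) (zs (j - 1))
                             * exp (- qtot (Kphi \<phi>) (zs (j - 1)) * t (j - 1)))"
proof -
  define A where "A j = {p. merge_step (zs j) p = zs (Suc j)}" for j
  define C where "C j = {e. t j < max 0 e / qtot (Kphi \<phi>) (zs j)}" for j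
  have C: "C j \<in> sets borel" for j unfolding C_def by measurable
  have "A j \<times> C j \<in> sets (noise_coord n j)" for j
    unfolding noise_coord_def using C by (intro pair_measureI) (auto simp: sets_exp1)
  then have "measure (noise n) (prod_emb UNIV (noise_coord n) {..<k} (Pi\<^sub>E {..<k} (\<lambda>j. A j \<times> C j)))
      = (\<Prod>j<k. measure (noise_coord n j) (A j \<times> C j))"
    unfolding noise_def by (intro product_prob_space.measure_PiM_emb[OF product_prob_space_noise]) auto
  also have "\<dots> = (\<Prod>j<k. measure (rank_pmf n j) (A j) * measure exp1 (C j))"
    using measure_noise_coord_Times C by simp
  also have "\<dots> = (\<Prod>j<k. qrate (Kphi \<phi>) (zs j) (zs (Suc j)) / qtot (Kphi \<phi>) (zs j)
              * exp (- qtot (Kphi \<phi>) (zs j) * t j))"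
    unfolding A_def C_def using noise_product_formula[of \<phi> X0 n zs t k, OF pos incr x z0 t k] by blast
  also have "\<dots> = (\<Prod>j\<in>{1..k}. qrate (Kphi \<phi>) (zs (j - 1)) (zs j) / qtot (Kphi \<phi>) (zs (j - 1))
                             * exp (- qtot (Kphi \<phi>) (zs (j - 1)) * t (j - 1)))"
    by (subst One_nat_def, subst prod.atLeast1_atMost_eq) simp
  finally show ?thesis
    using noise_event_cylinder[where zs=zs and t=t and K="Kphi \<phi>", OF z0 k] unfolding A_def C_def by simp
qed

lemma mdc_law_noise_image:
  fixes \<phi> :: "nat \<Rightarrow> real"
  assumes pos: "\<forall>i\<ge>1. 0 < \<phi> i" and incr: "mono_on {1..} \<phi>"
    and x: "l1N X0" "npart X0 = n"
    and F: "F \<in> noise n \<rightarrow>\<^sub>M N" and g: "g \<in> N \<rightarrow>\<^sub>M jhspace"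
    and gF: "\<And>\<omega>. g (F \<omega>) = jh_of_noise (Kphi \<phi>) n X0 \<omega>"
  shows "mdc_law (Kphi \<phi>) X0 (distr (noise n) N F) (\<lambda>\<omega>. fst (g \<omega>)) (\<lambda>\<omega>. snd (g \<omega>))"
  unfolding mdc_law_def
proof (intro conjI allI impI)
  have [measurable]: "(\<lambda>\<omega>. fst (g \<omega>) j) \<in> N \<rightarrow>\<^sub>M count_space UNIV"
    "(\<lambda>\<omega>. snd (g \<omega>) j) \<in> borel_measurable N" for j
    using measurable_compose[OF g jhspace_chain_measurable]
      measurable_compose[OF g jhspace_holding_measurable] by simp_all
  show "prob_space (distr (noise n) N F)"
    by (rule prob_space.prob_space_distr[OF prob_space_noise F])
  have "{\<omega> \<in> space N. fst (g \<omega>) 0 = X0} \<in> sets N" by measurable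
  then show "AE \<omega> in distr (noise n) N F. fst (g \<omega>) 0 = X0"
    by (subst AE_distr_iff[OF F]) (simp_all add: gF jh_of_noise_def)
  fix k :: nat and zs :: "nat \<Rightarrow> state" and t :: "nat \<Rightarrow> real"
  assume k: "k \<le> npart X0 - 1" and z0: "zs 0 = X0" and t: "\<forall>j. 0 \<le> t j"
  define E where "E = {\<omega>\<in>space N. (\<forall>j\<in>{1..k}. fst (g \<omega>) j = zs j) \<and> (\<forall>j<k. t j < snd (g \<omega>) j)}"
  have E: "E \<in> sets N" unfolding E_def by measurable
  then show "{\<omega>\<in>space (distr (noise n) N F). (\<forall>j\<in>{1..k}. fst (g \<omega>) j = zs j) \<and> (\<forall>j<k. t j < snd (g \<omega>) j)}
      \<in> sets (distr (noise n) N F)" unfolding E_def by simp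
  have "F -` E \<inter> space (noise n) = {\<omega>\<in>space (noise n). (\<forall>j\<in>{1..k}. noise_chain n X0 \<omega> j = zs j)
              \<and> (\<forall>j<k. t j < holding (Kphi \<phi>) n X0 \<omega> j)}"
    unfolding E_def using measurable_space[OF F] by (auto simp: gF jh_of_noise_def)
  then have "measure (distr (noise n) N F) E = (\<Prod>j\<in>{1..k}. qrate (Kphi \<phi>) (zs (j - 1)) (zs j)
       / qtot (Kphi \<phi>) (zs (j - 1)) * exp (- qtot (Kphi \<phi>) (zs (j - 1)) * t (j - 1)))"
    using measure_distr[OF F E] noise_event_measure[where zs=zs, OF pos incr x _ z0 t] k x by simp
  then show "measure (distr (noise n) N F)
      {\<omega>\<in>space (distr (noise n) N F). (\<forall>j\<in>{1..k}. fst (g \<omega>) j = zs j) \<and> (\<forall>j<k. t j < snd (g \<omega>) j)}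
    = (\<Prod>j\<in>{1..k}. qrate (Kphi \<phi>) (zs (j - 1)) (zs j) / qtot (Kphi \<phi>) (zs (j - 1))
                             * exp (- qtot (Kphi \<phi>) (zs (j - 1)) * t (j - 1)))"
    unfolding E_def by simp
qed

section \<open>The coupling\<close>

text \<open>Driven by the same noise, the process with dominated counts has the smaller smallest
  size, hence the smaller total rate and the longer holding times.\<close>
lemma holding_le:
  fixes \<phi> :: "nat \<Rightarrow> real"
  assumes pos: "\<forall>i\<ge>1. 0 < \<phi> i" and incr: "mono_on {1..} \<phi>"
    and x: "l1N X0" "npart X0 = n" and y: "l1N Y0" "npart Y0 = n" and d: "cumul_dom Y0 X0"
    and j: "j < n - 1"
  shows "holding (Kphi \<phi>) n X0 \<omega> j \<le> holding (Kphi \<phi>) n Y0 \<omega> j"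
proof -
  define Z W where "Z = noise_chain n X0 \<omega> j" and "W = noise_chain n Y0 \<omega> j"
  have z: "l1N Z" "npart Z = n - j" and w: "l1N W" "npart W = n - j"
    using rank_chain_valid[OF x, of j] rank_chain_valid[OF y, of j] j unfolding Z_def W_def by auto
  have two: "2 \<le> n - j" using j by simp
  have "lX W \<le> lX Z"
    using cumul_dom_lX[OF z(1) _ w(1)] rank_chain_cumul_dom[OF x y d] z w two unfolding Z_def W_def
    by simp
  moreover obtain i where "0 < W i" using w two npart_pos_iff by fastforce
  then have "1 \<le> lX W" by (rule lX_ge1[OF w(1)])
  ultimately have "\<phi> (lX W) \<le> \<phi> (lX Z)" "0 < \<phi> (lX W)"
    using incr pos unfolding mono_on_def by auto
  then have "qtot (Kphi \<phi>) W \<le> qtot (Kphi \<phi>) Z" "0 < qtot (Kphi \<phi>) W"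
    using qtot_min_kernel[OF incr z(1)] qtot_min_kernel[OF incr w(1)] z w two
    by (auto intro: mult_right_mono)
  then show ?thesis unfolding holding_def Z_def[symmetric] W_def[symmetric]
    by (intro divide_left_mono) auto
qed

text \<open>The chain depends only on the first n ranks, so the pairs of chains driven by common
  ranks form a countable set.\<close>
lemma rank_chain_cong: "\<forall>j<n. r j = r' j \<Longrightarrow> rank_chain n X0 r k = rank_chain n X0 r' k"
  by (induction k) auto

definition seq_of_list :: "nat list \<Rightarrow> nat \<Rightarrow> nat" where
  "seq_of_list l j = (if j < length l then l ! j else 0)"

lemma rank_chain_seq_of_list: "rank_chain n X0 r = rank_chain n X0 (seq_of_list (map r [0..<n]))"
  by (intro ext rank_chain_cong) (simp add: seq_of_list_def)

lemma singleton_sets_PiM_count_space: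
  "{z} \<in> sets (Pi\<^sub>M (UNIV :: nat set) (\<lambda>_. count_space (UNIV :: 'a set)))"
proof -
  have "{f \<in> space (Pi\<^sub>M UNIV (\<lambda>_. count_space UNIV)). \<forall>j::nat. f j = z j}
      \<in> sets (Pi\<^sub>M UNIV (\<lambda>_. count_space (UNIV :: 'a set)))" by measurable
  moreover have "{f \<in> space (Pi\<^sub>M UNIV (\<lambda>_. count_space (UNIV :: 'a set))). \<forall>j::nat. f j = z j} = {z}"
    by (auto simp: space_PiM fun_eq_iff)
  ultimately show ?thesis by simp
qed

lemma ordered_pair_event_sets:
  assumes D: "countable D"
  shows "{\<omega> \<in> space (jhspace \<Otimes>\<^sub>M jhspace). (fst (fst \<omega>), fst (snd \<omega>)) \<in> D
            \<and> (\<forall>j<m. snd (fst \<omega>) j \<le> snd (snd \<omega>) j)} \<in> sets (jhspace \<Otimes>\<^sub>M jhspace)"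
    (is "{\<omega> \<in> space ?N. _} \<in> _")
proof -
  have Z1: "(\<lambda>\<omega>. fst (fst \<omega>)) \<in> ?N \<rightarrow>\<^sub>M Pi\<^sub>M UNIV (\<lambda>_. count_space UNIV)"
    and Z2: "(\<lambda>\<omega>. fst (snd \<omega>)) \<in> ?N \<rightarrow>\<^sub>M Pi\<^sub>M UNIV (\<lambda>_. count_space UNIV)"
    unfolding jhspace_def by (auto intro: measurable_compose[OF measurable_fst measurable_fst]
        measurable_compose[OF measurable_snd measurable_fst])
  have [measurable]: "(\<lambda>\<omega>. snd (fst \<omega>) j) \<in> borel_measurable ?N"
    "(\<lambda>\<omega>. snd (snd \<omega>) j) \<in> borel_measurable ?N" for j
    by (auto intro: measurable_compose[OF measurable_fst jhspace_holding_measurable]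
        measurable_compose[OF measurable_snd jhspace_holding_measurable])
  have "{\<omega> \<in> space ?N. (fst (fst \<omega>), fst (snd \<omega>)) \<in> D}
      = (\<Union>p\<in>D. ((\<lambda>\<omega>. fst (fst \<omega>)) -` {fst p} \<inter> space ?N) \<inter> ((\<lambda>\<omega>. fst (snd \<omega>)) -` {snd p} \<inter> space ?N))"
    by force
  also have "\<dots> \<in> sets ?N"
    using D by (intro sets.countable_UN'' sets.Int measurable_sets[OF Z1 singleton_sets_PiM_count_space]
        measurable_sets[OF Z2 singleton_sets_PiM_count_space])
  finally have "{\<omega> \<in> space ?N. (fst (fst \<omega>), fst (snd \<omega>)) \<in> D} \<in> sets ?N" .
  moreover have "{\<omega> \<in> space ?N. \<forall>j<m. snd (fst \<omega>) j \<le> snd (snd \<omega>) j} \<in> sets ?N" by measurable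
  ultimately show ?thesis by (auto dest: sets.Int)
qed

text \<open>Each marginal is the
  min-driven process, and almost surely (in fact surely) the two chains use common ranks and
  the Y-holding times are the longer ones, so the pathwise comparison applies.\<close>
theorem min_driven_coupling:
  fixes \<phi> :: "nat \<Rightarrow> real"
  assumes pos: "\<forall>i\<ge>1. 0 < \<phi> i" and incr: "mono_on {1..} \<phi>"
    and x: "l1N X0" "npart X0 = n" and y: "l1N Y0" "npart Y0 = n" and n: "1 \<le> n"
    and d: "cumul_dom Y0 X0"
  shows "mdc_coupling (Kphi \<phi>) X0 Y0 (\<lambda>X Y. (\<forall>i\<ge>1. Tsub i X \<le> Tsub i Y) \<and> Tabs X \<le> Tabs Y)"
proof -
  define N where "N = jhspace \<Otimes>\<^sub>M jhspace"
  define F where "F \<omega> = (jh_of_noise (Kphi \<phi>) n X0 \<omega>, jh_of_noise (Kphi \<phi>) n Y0 \<omega>)" for \<omega>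
  have F: "F \<in> noise n \<rightarrow>\<^sub>M N" unfolding F_def N_def by (intro measurable_Pair jh_of_noise_measurable)
  define \<mu> where "\<mu> = distr (noise n) N F"
  have laws: "mdc_law (Kphi \<phi>) X0 \<mu> (\<lambda>\<omega>. fst (fst \<omega>)) (\<lambda>\<omega>. snd (fst \<omega>))"
    "mdc_law (Kphi \<phi>) Y0 \<mu> (\<lambda>\<omega>. fst (snd \<omega>)) (\<lambda>\<omega>. snd (snd \<omega>))"
    unfolding \<mu>_def using mdc_law_noise_image[OF pos incr x F] mdc_law_noise_image[OF pos incr y F]
    by (auto simp: N_def F_def)
  define D where "D = (\<lambda>l. (rank_chain n X0 (seq_of_list l), rank_chain n Y0 (seq_of_list l))) ` UNIV"
  define P where "P \<omega> \<longleftrightarrow> (fst (fst \<omega>), fst (snd \<omega>)) \<in> D \<and> (\<forall>j<n - 1. snd (fst \<omega>) j \<le> snd (snd \<omega>) j)"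
    for \<omega> :: "jh \<times> jh"
  have "P (F \<omega>)" for \<omega>
    using rank_chain_seq_of_list[of n X0] rank_chain_seq_of_list[of n Y0] holding_le[OF pos incr x y d]
    unfolding P_def F_def D_def jh_of_noise_def by auto
  moreover have "{\<omega> \<in> space N. P \<omega>} \<in> sets N"
    unfolding P_def N_def D_def by (intro ordered_pair_event_sets) simp
  ultimately have AE_P: "AE \<omega> in \<mu>. P \<omega>" unfolding \<mu>_def by (simp add: AE_distr_iff[OF F])
  have compare: "(\<forall>i\<ge>1. Tsub i (cpath n (fst \<omega>)) \<le> Tsub i (cpath n (snd \<omega>)))
      \<and> Tabs (cpath n (fst \<omega>)) \<le> Tabs (cpath n (snd \<omega>))" if "P \<omega>" for \<omega>
  proof -
    obtain l where l: "fst (fst \<omega>) = rank_chain n X0 (seq_of_list l)"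
        "fst (snd \<omega>) = rank_chain n Y0 (seq_of_list l)"
      using \<open>P \<omega>\<close> unfolding P_def D_def by auto
    obtain hX hY where "fst \<omega> = (rank_chain n X0 (seq_of_list l), hX)"
        "snd \<omega> = (rank_chain n Y0 (seq_of_list l), hY)"
      using l by (metis prod.collapse)
    moreover from this have "\<forall>j<n - 1. hX j \<le> hY j" using \<open>P \<omega>\<close> unfolding P_def by simp
    ultimately show ?thesis using path_comparison_Tsub[OF x y d] path_comparison_Tabs[OF x y n] by simp
  qed
  have "AE \<omega> in \<mu>. (\<lambda>X Y. (\<forall>i\<ge>1. Tsub i X \<le> Tsub i Y) \<and> Tabs X \<le> Tabs Y)
      (cpath (npart X0) (fst \<omega>)) (cpath (npart Y0) (snd \<omega>))"
    using AE_P by (rule eventually_mono) (use compare x y in simp)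
  then show ?thesis unfolding mdc_coupling_def
    by (intro exI[of _ \<mu>]) (use laws in \<open>simp add: \<mu>_def N_def\<close>)
qed

lemma monodisperse_dominates:
  assumes x: "l1N X0"
  defines "Y0 \<equiv> \<lambda>k. npart X0 * unitseq 1 k"
  shows "l1N Y0" "npart Y0 = npart X0" "cumul_dom Y0 X0"
proof -
  have Y: "Y0 k = (if k = 1 then npart X0 else 0)" for k unfolding Y0_def unitseq_def by simp
  have supp: "{i. 0 < Y0 i} \<subseteq> {1}" using Y by auto
  show "l1N Y0" using finite_subset[OF supp] Y unfolding l1N_def by auto
  then have "npart Y0 = sum Y0 {1}" using npart_eq_sum[OF _ _ supp] by simp
  then show "npart Y0 = npart X0" using Y by simp
  have "cumul Y0 c = (if 1 \<le> c then npart X0 else 0)" for c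
    unfolding cumul_def Y by (simp add: sum.delta)
  then show "cumul_dom Y0 X0"
    using cumul_le_npart[OF x] cumul_0[OF x] unfolding cumul_dom_def
    by (metis bot_nat_0.extremum less_one linorder_not_less)
qed

lemma npart_ge1: assumes "l1N X" "X \<noteq> (\<lambda>_. 0)" shows "1 \<le> npart X"
proof -
  obtain i where "X i \<noteq> 0" using assms(2) by auto
  then show ?thesis using npart_pos_iff[OF assms(1)] by blast
qed

theorem lemma5p1:
  fixes \<phi> :: "nat \<Rightarrow> real"
  assumes pos: "\<forall>i\<ge>1. 0 < \<phi> i"
    and incr: "mono_on {1..} \<phi>"
  shows "(\<forall>X0 Y0. l1N X0 \<and> l1N Y0 \<and> X0 \<noteq> (\<lambda>_. 0) \<and> Y0 \<noteq> (\<lambda>_. 0)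
              \<and> npart X0 = npart Y0 \<and> (\<forall>m\<in>{1..npart X0}. S m Y0 \<le> S m X0)
           \<longrightarrow> mdc_coupling (Kphi \<phi>) X0 Y0
                 (\<lambda>X Y. (\<forall>i\<ge>1. Tsub i X \<le> Tsub i Y) \<and> Tabs X \<le> Tabs Y))
       \<and> (\<forall>X0. l1N X0 \<and> X0 \<noteq> (\<lambda>_. 0)
           \<longrightarrow> mdc_coupling (Kphi \<phi>) X0 (\<lambda>k. npart X0 * unitseq 1 k)
                 (\<lambda>X Y. Tsub 1 X \<le> Tsub 1 Y \<and> Tabs X \<le> Tabs Y))"
proof (intro conjI allI impI)
  fix X0 Y0 :: state
  assume h: "l1N X0 \<and> l1N Y0 \<and> X0 \<noteq> (\<lambda>_. 0) \<and> Y0 \<noteq> (\<lambda>_. 0)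
              \<and> npart X0 = npart Y0 \<and> (\<forall>m\<in>{1..npart X0}. S m Y0 \<le> S m X0)"
  then have x: "l1N X0" "X0 \<noteq> (\<lambda>_. 0)" and y: "l1N Y0" and n: "npart Y0 = npart X0"
    and le: "\<forall>m\<in>{1..npart X0}. S m Y0 \<le> S m X0" by auto
  have "cumul_dom Y0 X0" using S_le_imp_cumul_dom[OF x(1) y n[symmetric] le] .
  then show "mdc_coupling (Kphi \<phi>) X0 Y0 (\<lambda>X Y. (\<forall>i\<ge>1. Tsub i X \<le> Tsub i Y) \<and> Tabs X \<le> Tabs Y)"
    by (rule min_driven_coupling[OF pos incr x(1) refl y n npart_ge1[OF x]])
next
  fix X0 :: state
  assume h: "l1N X0 \<and> X0 \<noteq> (\<lambda>_. 0)"
  then have x: "l1N X0" and n: "1 \<le> npart X0" using npart_ge1 by blast+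
  note mono = monodisperse_dominates[OF x]
  have "mdc_coupling (Kphi \<phi>) X0 (\<lambda>k. npart X0 * unitseq 1 k)
      (\<lambda>X Y. (\<forall>i\<ge>1. Tsub i X \<le> Tsub i Y) \<and> Tabs X \<le> Tabs Y)"
    by (rule min_driven_coupling[OF pos incr x refl mono(1,2) n mono(3)])
  then show "mdc_coupling (Kphi \<phi>) X0 (\<lambda>k. npart X0 * unitseq 1 k) (\<lambda>X Y. Tsub 1 X \<le> Tsub 1 Y \<and> Tabs X \<le> Tabs Y)"
    unfolding mdc_coupling_def by (auto elim!: eventually_mono)
qed

end
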